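(* Let $X$ be a $T_1$ topological space. Then $C(X)_F\subseteq T''(X)$ (so that $C(X)_F$ is a subring of $T''(X)$) if and only if $X$ is a nowhere almost $P$-space.
   Context: $C(X)$ is the ring of real-valued continuous functions on $X$; a cozero set is a set $\{x: h(x)\neq 0\}$ with $h\in C(X)$. $T''(X)$ is the ring of all functions $f\colon X\to\mathbb{R}$ for which there is a dense cozero set $U$ of $X$ with $f|_U$ continuous. $C(X)_F$ is the ring of all functions $f\colon X\to\mathbb{R}$ whose set of points of discontinuity is finite. $\chi_A$ is the characteristic function of $A$. $X$ is a nowhere almost $P$-space if $\chi_{\{p\}}\in T''(X)$ for all $p\in X$. *)

theory Defs
  imports "HOL-Analysis.Analysis"
begin

definition cozero_set :: "'a::topological_space set \<Rightarrow> bool" where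
  "cozero_set U \<longleftrightarrow> (\<exists>h :: 'a \<Rightarrow> real. continuous_on UNIV h \<and> U = {x. h x \<noteq> 0})"

definition T2prime :: "('a::topological_space \<Rightarrow> real) set" where
  "T2prime = {f. \<exists>U. cozero_set U \<and> closure U = UNIV \<and> continuous_on U f}"

definition CF :: "('a::topological_space \<Rightarrow> real) set" where
  "CF = {f. finite {x. \<not> (f \<longlongrightarrow> f x) (at x)}}"

definition nowhere_almost_P :: "'a::topological_space itself \<Rightarrow> bool" where
  "nowhere_almost_P _ \<longleftrightarrow> (\<forall>p::'a. (indicator {p} :: 'a \<Rightarrow> real) \<in> T2prime)"

end

theory Submission
  imports Defs
begin

text \<open>
  The indicator of a point p of a T1 space is continuous off p, so it lies in CF; hence CF
  contained in T2prime makes X nowhere almost P. Conversely, let f be in CF with finite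
  discontinuity set D. A discontinuity point d is not isolated, and a dense cozero set V on
  which the indicator of d is continuous cannot contain d, for then d would be isolated in the
  open set V. Intersecting such sets for all d in D gives a dense cozero set missing D, and f is
  continuous on it.
\<close>

lemma cozero_set_imp_open: "cozero_set U \<Longrightarrow> open U"
  unfolding cozero_set_def
  by (auto intro: open_Collect_neq continuous_on_const simp: continuous_on_eq_continuous_at)

lemma cozero_set_UNIV: "cozero_set UNIV"
  unfolding cozero_set_def by (rule exI[of _ "\<lambda>_. 1"]) auto

lemma cozero_set_Int:
  assumes "cozero_set U" "cozero_set V"
  shows "cozero_set (U \<inter> V)"
proof -
  obtain g h :: "_ \<Rightarrow> real"
    where g: "continuous_on UNIV g" "U = {x. g x \<noteq> 0}"
      and h: "continuous_on UNIV h" "V = {x. h x \<noteq> 0}"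
    using assms unfolding cozero_set_def by blast
  have "continuous_on UNIV (\<lambda>x. g x * h x)"
    using g h by (intro continuous_intros)
  moreover have "U \<inter> V = {x. g x * h x \<noteq> 0}"
    using g h by auto
  ultimately show ?thesis
    unfolding cozero_set_def by blast
qed

lemma closure_open_Int_eq_UNIV:
  assumes "open S" "closure S = UNIV" "closure T = UNIV"
  shows "closure (S \<inter> T) = UNIV"
proof -
  have "S \<subseteq> closure (S \<inter> T)"
    using open_Int_closure_subset[OF \<open>open S\<close>, of T] \<open>closure T = UNIV\<close> by simp
  then show ?thesis
    using \<open>closure S = UNIV\<close> closure_minimal[of S "closure (S \<inter> T)"] by auto
qed

lemma open_singleton_if_continuous_on_indicator:
  assumes "open U" "p \<in> U" "continuous_on U (indicator {p} :: _ \<Rightarrow> real)"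
  shows "open {p}"
proof -
  have "open ((indicator {p} :: _ \<Rightarrow> real) -` {0<..} \<inter> U)"
    using assms(3) continuous_on_open_vimage[OF assms(1)] open_greaterThan by blast
  moreover have "(indicator {p} :: _ \<Rightarrow> real) -` {0<..} \<inter> U = {p}"
    using \<open>p \<in> U\<close> by (auto simp: indicator_def)
  ultimately show ?thesis
    by simp
qed

lemma indicator_singleton_in_CF: "(indicator {p} :: 'a::t1_space \<Rightarrow> real) \<in> CF"
proof -
  have "((indicator {p} :: 'a \<Rightarrow> real) \<longlongrightarrow> indicator {p} x) (at x)" if "x \<noteq> p" for x
  proof -
    have "eventually (\<lambda>y. y \<in> - {p}) (at x)"
      using \<open>x \<noteq> p\<close> by (intro eventually_at_in_open') auto
    then have "eventually (\<lambda>y. (indicator {p} y :: real) = indicator {p} x) (at x)"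
      by eventually_elim (use \<open>x \<noteq> p\<close> in auto)
    then show ?thesis
      by (rule tendsto_eventually)
  qed
  then have "{x. \<not> ((indicator {p} :: 'a \<Rightarrow> real) \<longlongrightarrow> indicator {p} x) (at x)} \<subseteq> {p}"
    by blast
  then show ?thesis
    unfolding CF_def by (auto intro: finite_subset)
qed

lemma dense_cozero_set_avoiding_finite:
  fixes D :: "'a::topological_space set"
  assumes "nowhere_almost_P TYPE('a)" "finite D" "\<And>d. d \<in> D \<Longrightarrow> \<not> open {d}"
  obtains U where "cozero_set U" "closure U = UNIV" "U \<inter> D = {}"
  using assms(2,3)
proof (induction D arbitrary: thesis rule: finite_induct)
  case empty
  then show ?case
    using cozero_set_UNIV by (metis closure_UNIV Int_empty_right)
next
  case (insert d D)
  obtain U where U: "cozero_set U" "closure U = UNIV" "U \<inter> D = {}"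
    using insert.IH insert.prems(2) by blast
  obtain V where V: "cozero_set V" "closure V = UNIV"
      "continuous_on V (indicator {d} :: 'a \<Rightarrow> real)"
    using assms(1) unfolding nowhere_almost_P_def T2prime_def by blast
  have "d \<notin> V"
    using open_singleton_if_continuous_on_indicator[OF cozero_set_imp_open[OF V(1)] _ V(3)]
      insert.prems(2) by blast
  show ?case
  proof (rule insert.prems(1))
    show "cozero_set (U \<inter> V)"
      using U(1) V(1) by (rule cozero_set_Int)
    show "closure (U \<inter> V) = UNIV"
      using cozero_set_imp_open[OF U(1)] U(2) V(2) by (rule closure_open_Int_eq_UNIV)
    show "U \<inter> V \<inter> insert d D = {}"
      using U(3) \<open>d \<notin> V\<close> by blast
  qed
qed

lemma CF_subset_T2prime_if_nowhere_almost_P: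
  assumes "nowhere_almost_P TYPE('a::topological_space)"
  shows "(CF :: ('a \<Rightarrow> real) set) \<subseteq> T2prime"
proof
  fix f :: "'a \<Rightarrow> real"
  assume "f \<in> CF"
  define D where "D = {x. \<not> (f \<longlongrightarrow> f x) (at x)}"
  have "finite D"
    using \<open>f \<in> CF\<close> by (simp add: CF_def D_def)
  moreover have "\<not> open {d}" if "d \<in> D" for d
    using that by (auto simp: D_def simp flip: at_eq_bot_iff)
  ultimately obtain U where U: "cozero_set U" "closure U = UNIV" "U \<inter> D = {}"
    using dense_cozero_set_avoiding_finite[OF assms] by metis
  have "continuous_on U f"
    unfolding continuous_on_def using U(3) by (auto simp: D_def intro: tendsto_within_subset)
  then show "f \<in> T2prime"
    unfolding T2prime_def using U(1,2) by blast
qed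

theorem theorem4p2:
  shows "(CF :: ('a::t1_space \<Rightarrow> real) set) \<subseteq> T2prime \<longleftrightarrow> nowhere_almost_P TYPE('a)"
  using indicator_singleton_in_CF CF_subset_T2prime_if_nowhere_almost_P
  unfolding nowhere_almost_P_def by blast

end
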